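(* Assume $J$ satisfies (J1), (J2), (J3), (J4) and $h$ satisfies (h1), (h2). For $\ell\in\mathbb N$ let $\psi^{(\ell)}$ be the configuration with $\psi^{(\ell)}_i=-1$ for $i\in Q_\ell$ and $\psi^{(\ell)}_i=1$ for $i\in\mathbb Z^d\setminus Q_\ell$. Then there is a constant $C\ge1$, depending only on $d$, $\mu$ and $\tau$, such that for every $\ell\in\mathbb N$ $$H_{Q_\ell}(\psi^{(\ell)})\le C\,\ell^{d-1}\Big(1+\sum_{m=1}^{\ell+1}\sigma(m)\Big).$$
   Context: Fix $d\ge2$, $|x|:=\sum_n|x_n|$, $|x|_\infty:=\max_n|x_n|$. Configurations are maps $u:\mathbb Z^d\to\{-1,1\}$. Given $J:\mathbb Z^d\times\mathbb Z^d\to[0,\infty)$ and $h:\mathbb Z^d\to\mathbb R$, for finite $\Gamma$: $H_\Gamma(u):=\sum_{(i,j)\in\mathbb Z^{2d}\setminus(\mathbb Z^d\setminus\Gamma)^2}J_{ij}(1-u_iu_j)+\sum_{i\in\Gamma}h_iu_i$. $Q_\ell:=\{i\in\mathbb Z^d:|i|_\infty\le\ell\}$. Conditions (constants $\Lambda\ge\lambda>0$, $\mu>0$, $\tau\in\mathbb N$): (J1) $J_{ij}=J_{ji}$; (J2) $J_{ii}=0$; (J3) $J_{ij}\ge\lambda$ if $|i-j|=1$; (J4) $\sum_jJ_{ij}\le\Lambda$ for all $i$; (h1) $\sup_i|h_i|\le\mu$; (h2) $\sum_{i\in F}h_i=0$ for every fundamental domain $F$ (set of representatives) of $\mathbb Z^d/\tau\mathbb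 Z^d$. For $R\in\mathbb N$, $\sigma(R):=\sup_{i\in\mathbb Z^d}\sum_{j:\,|j-i|_\infty\ge R}J_{ij}$. *)

theory Defs
  imports "HOL-Analysis.Analysis"
begin

text \<open>Sites of the lattice Z^d are functions 'n \<Rightarrow> int for a finite index type 'n
  with CARD('n) = d.\<close>

definition l1norm :: "('n::finite \<Rightarrow> int) \<Rightarrow> int" where
  "l1norm x = (\<Sum>k\<in>UNIV. \<bar>x k\<bar>)"

definition supnorm :: "('n::finite \<Rightarrow> int) \<Rightarrow> int" where
  "supnorm x = Max (range (\<lambda>k. \<bar>x k\<bar>))"

definition cube :: "nat \<Rightarrow> ('n::finite \<Rightarrow> int) set" where
  "cube l = {i. supnorm i \<le> int l}"

definition hamiltonian ::
  "(('n::finite \<Rightarrow> int) \<Rightarrow> ('n \<Rightarrow> int) \<Rightarrow> real) \<Rightarrow> (('n \<Rightarrow> int) \<Rightarrow> real)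
    \<Rightarrow> ('n \<Rightarrow> int) set \<Rightarrow> (('n \<Rightarrow> int) \<Rightarrow> real) \<Rightarrow> real" where
  "hamiltonian J h \<Gamma> u =
     (\<Sum>\<^sub>\<infinity>(i,j)\<in>UNIV - ((- \<Gamma>) \<times> (- \<Gamma>)). J i j * (1 - u i * u j))
     + (\<Sum>i\<in>\<Gamma>. h i * u i)"

definition sigma_tail ::
  "(('n::finite \<Rightarrow> int) \<Rightarrow> ('n \<Rightarrow> int) \<Rightarrow> real) \<Rightarrow> nat \<Rightarrow> real" where
  "sigma_tail J R = (SUP i. (\<Sum>\<^sub>\<infinity>j\<in>{j. supnorm (j - i) \<ge> int R}. J i j))"

definition fundamental_domain :: "nat \<Rightarrow> ('n::finite \<Rightarrow> int) set \<Rightarrow> bool" where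
  "fundamental_domain \<tau> F \<longleftrightarrow> (\<forall>x. \<exists>!f. f \<in> F \<and> (\<forall>k. int \<tau> dvd (x k - f k)))"

definition psi :: "nat \<Rightarrow> ('n::finite \<Rightarrow> int) \<Rightarrow> real" where
  "psi l i = (if i \<in> cube l then -1 else 1)"

end

theory Submission
  imports Defs
begin

text \<open>The droplet psi l pays interaction energy only for pairs with one site in the cube Q and one
  outside, which gives at most 4 times the coupling across the boundary of Q. A site on the sphere
  of sup-radius k is at sup-distance at least l + 1 - k from the complement of Q, so its coupling
  across the boundary is at most sigma (l + 1 - k), and that sphere has O(k^(d-1)) sites.
  For the field, (h2) makes h periodic modulo tau with zero sum over a period. Grouping Q into
  residue classes, every class meets Q in almost the same number of sites, so only the spread of
  these counts, which is O(l^(d-1)), contributes.\<close>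

lemma power_Suc_diff_le:
  fixes a b :: "'a::linordered_idom"
  assumes "0 \<le> b" "b \<le> a"
  shows "a^Suc n - b^Suc n \<le> of_nat (Suc n) * a^n * (a - b)"
proof (induction n)
  case (Suc n)
  have "a^Suc (Suc n) - b^Suc (Suc n) = a * (a^Suc n - b^Suc n) + b^Suc n * (a - b)"
    by (simp add: algebra_simps)
  also have "\<dots> \<le> a * (of_nat (Suc n) * a^n * (a - b)) + a^Suc n * (a - b)"
    using assms by (intro add_mono mult_left_mono[OF Suc] mult_right_mono power_mono) auto
  also have "\<dots> = of_nat (Suc (Suc n)) * a^Suc n * (a - b)" by (simp add: algebra_simps)
  finally show ?case .
qed simp

lemma supnorm_le_iff: "supnorm (x::'n::finite\<Rightarrow>int) \<le> c \<longleftrightarrow> (\<forall>k. \<bar>x k\<bar> \<le> c)"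
  unfolding supnorm_def by (subst Max_le_iff) auto

lemma abs_le_supnorm: "\<bar>(x::'n::finite\<Rightarrow>int) k\<bar> \<le> supnorm x"
  unfolding supnorm_def by (rule Max_ge) auto

lemma supnorm_nonneg: "0 \<le> supnorm (x::'n::finite\<Rightarrow>int)"
  using abs_le_supnorm[of x undefined] by linarith

lemma supnorm_le_supnorm_diff_add: "supnorm (x::'n::finite\<Rightarrow>int) \<le> supnorm (x - y) + supnorm y"
  unfolding supnorm_le_iff
proof
  fix k
  have "\<bar>x k\<bar> \<le> \<bar>x k - y k\<bar> + \<bar>y k\<bar>" by linarith
  then show "\<bar>x k\<bar> \<le> supnorm (x - y) + supnorm y"
    using abs_le_supnorm[of "x - y" k] abs_le_supnorm[of y k] by simp
qed

lemma cube_eq_PiE: "cube l = (PiE UNIV (\<lambda>_. {-int l..int l}) :: ('n::finite\<Rightarrow>int) set)"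
  unfolding cube_def supnorm_le_iff by (auto simp: PiE_iff abs_le_iff minus_le_iff)

lemma finite_cube: "finite (cube l :: ('n::finite\<Rightarrow>int) set)"
  unfolding cube_eq_PiE by (rule finite_PiE) auto

lemma card_cube: "card (cube l :: ('n::finite\<Rightarrow>int) set) = (2*l+1)^CARD('n)"
proof -
  have "nat (2 * int l + 1) = 2*l+1" by simp
  then show ?thesis unfolding cube_eq_PiE by (simp add: card_PiE)
qed

lemma card_supnorm_sphere_le:
  "real (card {i::'n::finite\<Rightarrow>int. supnorm i = int k}) \<le> 2 * CARD('n) * (2*k+1)^(CARD('n)-1)"
proof (cases k)
  case 0
  have "{i::'n\<Rightarrow>int. supnorm i = 0} \<subseteq> {\<lambda>_. 0}"
  proof
    fix i :: "'n\<Rightarrow>int" assume "i \<in> {i. supnorm i = 0}"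
    then have "i k = 0" for k using abs_le_supnorm[of i k] by simp
    then show "i \<in> {\<lambda>_. 0}" by auto
  qed
  then have "card {i::'n\<Rightarrow>int. supnorm i = int k} \<le> card {\<lambda>_::'n. 0::int}"
    using 0 by (intro card_mono) auto
  then have "real (card {i::'n\<Rightarrow>int. supnorm i = int k}) \<le> 1" by simp
  moreover have "(1::real) \<le> CARD('n)" by (simp add: Suc_leI)
  moreover have "2 * CARD('n) * (2*k+1)^(CARD('n)-1) = 2 * real CARD('n)" using 0 by simp
  ultimately show ?thesis by linarith
next
  case (Suc k')
  define d where "d = CARD('n) - 1"
  have d: "CARD('n) = Suc d" unfolding d_def by simp
  have shell: "{i::'n\<Rightarrow>int. supnorm i = int k} = cube k - cube k'"
    and "cube k' \<subseteq> cube k"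
    unfolding cube_def using Suc by auto
  have card_eq: "card {i::'n\<Rightarrow>int. supnorm i = int k} = (2*k+1)^Suc d - (2*k'+1)^Suc d"
    unfolding shell card_Diff_subset[OF finite_cube \<open>cube k' \<subseteq> cube k\<close>] card_cube d by (rule refl)
  have "(2*k'+1)^Suc d \<le> (2*k+1)^Suc d" using Suc by (intro power_mono) auto
  then have "real (card {i::'n\<Rightarrow>int. supnorm i = int k})
      = real (2*k+1)^Suc d - real (2*k'+1)^Suc d"
    unfolding card_eq by (simp only: of_nat_diff of_nat_power)
  also have "\<dots> \<le> real (Suc d) * real (2*k+1)^d * (real (2*k+1) - real (2*k'+1))"
    by (rule power_Suc_diff_le) (use Suc in auto)
  also have "real (2*k+1) - real (2*k'+1) = 2" using Suc by simp
  finally show ?thesis unfolding d by (simp add: algebra_simps)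
qed

lemma interaction_energy_le_boundary_coupling:
  fixes J :: "'a \<Rightarrow> 'a \<Rightarrow> real" and u :: "'a \<Rightarrow> real"
  assumes "finite \<Gamma>" and J_nonneg: "\<And>i j. J i j \<ge> 0" and J_sym: "\<And>i j. J i j = J j i"
    and u: "\<And>i. u i = (if i \<in> \<Gamma> then -1 else 1)"
  shows "(\<Sum>\<^sub>\<infinity>(i,j)\<in>UNIV - (- \<Gamma>) \<times> (- \<Gamma>). J i j * (1 - u i * u j))
     \<le> 4 * (\<Sum>i\<in>\<Gamma>. \<Sum>\<^sub>\<infinity>j\<in>- \<Gamma>. J i j)"
proof (cases "(\<lambda>(i,j). J i j * (1 - u i * u j)) summable_on UNIV - (- \<Gamma>) \<times> (- \<Gamma>)")
  case False
  then show ?thesis using J_nonneg by (simp add: infsum_not_exists sum_nonneg infsum_nonneg)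
next
  case True
  define g where "g = (\<lambda>(i,j). J i j * (1 - u i * u j))"
  define D where "D = \<Gamma> \<times> (- \<Gamma>)"
  have split: "UNIV - (- \<Gamma>) \<times> (- \<Gamma>) = \<Gamma> \<times> UNIV \<union> (- \<Gamma>) \<times> \<Gamma>" by auto
  have summable_first_in_\<Gamma>: "g summable_on \<Gamma> \<times> UNIV" and summable_second_in_\<Gamma>: "g summable_on (- \<Gamma>) \<times> \<Gamma>"
    using True unfolding g_def split by (auto elim: summable_on_subset_banach)
  have "infsum g (\<Gamma> \<times> UNIV) = infsum g D"
    by (rule infsum_cong_neutral) (auto simp: D_def g_def u)
  moreover have "infsum g ((- \<Gamma>) \<times> \<Gamma>) = infsum g D"
  proof -
    have "(- \<Gamma>) \<times> \<Gamma> = prod.swap ` D" unfolding D_def by auto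
    then have "infsum g ((- \<Gamma>) \<times> \<Gamma>) = infsum (g \<circ> prod.swap) D" by (simp add: infsum_reindex)
    also have "\<dots> = infsum g D" by (rule infsum_cong) (auto simp: g_def J_sym mult.commute)
    finally show ?thesis .
  qed
  moreover have "infsum g D = 2 * (\<Sum>i\<in>\<Gamma>. \<Sum>\<^sub>\<infinity>j\<in>- \<Gamma>. J i j)"
  proof -
    have "g summable_on D" using summable_first_in_\<Gamma> by (rule summable_on_subset_banach) (auto simp: D_def)
    then have "infsum g D = (\<Sum>i\<in>\<Gamma>. \<Sum>\<^sub>\<infinity>j\<in>- \<Gamma>. g (i,j))"
      using infsum_Sigma_banach[of g \<Gamma> "\<lambda>_. - \<Gamma>"] \<open>finite \<Gamma>\<close> by (simp add: D_def)
    also have "\<dots> = (\<Sum>i\<in>\<Gamma>. \<Sum>\<^sub>\<infinity>j\<in>- \<Gamma>. 2 * J i j)"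
      by (intro sum.cong infsum_cong refl) (auto simp: g_def u)
    finally show ?thesis by (simp add: infsum_cmult_right' sum_distrib_left)
  qed
  moreover have "infsum g (UNIV - (- \<Gamma>) \<times> (- \<Gamma>)) = infsum g (\<Gamma> \<times> UNIV) + infsum g ((- \<Gamma>) \<times> \<Gamma>)"
    unfolding split by (rule infsum_Un_disjoint[OF summable_first_in_\<Gamma> summable_second_in_\<Gamma>]) auto
  ultimately have "infsum g (UNIV - (- \<Gamma>) \<times> (- \<Gamma>)) = 4 * (\<Sum>i\<in>\<Gamma>. \<Sum>\<^sub>\<infinity>j\<in>- \<Gamma>. J i j)"
    by linarith
  then show ?thesis unfolding g_def by simp
qed

context
  fixes J :: "('n::finite\<Rightarrow>int) \<Rightarrow> ('n\<Rightarrow>int) \<Rightarrow> real" and \<Lambda> :: real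
  assumes J_nonneg: "\<And>i j. J i j \<ge> 0"
    and J_summable: "\<And>i. J i summable_on UNIV"
    and J_row_le: "\<And>i. (\<Sum>\<^sub>\<infinity>j. J i j) \<le> \<Lambda>"
begin

lemma infsum_row_mono: "X \<subseteq> Y \<Longrightarrow> infsum (J i) X \<le> infsum (J i) Y"
  by (rule infsum_mono_neutral) (auto intro: summable_on_subset_banach[OF J_summable] J_nonneg)

lemma sigma_tail_ge: "(\<Sum>\<^sub>\<infinity>j\<in>{j. supnorm (j - i) \<ge> int R}. J i j) \<le> sigma_tail J R"
  unfolding sigma_tail_def
proof (rule cSUP_upper)
  show "bdd_above (range (\<lambda>i. \<Sum>\<^sub>\<infinity>j\<in>{j. supnorm (j - i) \<ge> int R}. J i j))"
    using infsum_row_mono[of _ UNIV] J_row_le by (intro bdd_aboveI2[where M=\<Lambda>]) (meson order_trans subset_UNIV)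
qed simp

lemma sigma_tail_nonneg: "sigma_tail J R \<ge> 0"
proof -
  have "0 \<le> (\<Sum>\<^sub>\<infinity>j\<in>{j. supnorm (j - i) \<ge> int R}. J i j)" for i
    by (rule infsum_nonneg) (rule J_nonneg)
  then show ?thesis using sigma_tail_ge order_trans by blast
qed

lemma infsum_outside_cube_le_sigma_tail:
  assumes "i \<in> cube l"
  shows "(\<Sum>\<^sub>\<infinity>j\<in>- cube l. J i j) \<le> sigma_tail J (l + 1 - nat (supnorm i))"
proof -
  have "0 \<le> supnorm i" "supnorm i \<le> int l"
    using assms supnorm_nonneg unfolding cube_def by auto
  then have R: "int (l + 1 - nat (supnorm i)) = int l + 1 - supnorm i" by linarith
  have "- cube l \<subseteq> {j. supnorm (j - i) \<ge> int (l + 1 - nat (supnorm i))}"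
  proof
    fix j :: "'n\<Rightarrow>int" assume "j \<in> - cube l"
    then show "j \<in> {j. supnorm (j - i) \<ge> int (l + 1 - nat (supnorm i))}"
      using supnorm_le_supnorm_diff_add[of j i] unfolding R cube_def by auto
  qed
  then show ?thesis using infsum_row_mono sigma_tail_ge order_trans by blast
qed

lemma boundary_coupling_le:
  "(\<Sum>i\<in>cube l. \<Sum>\<^sub>\<infinity>j\<in>- cube l. J i j)
     \<le> 2 * CARD('n) * (2*l+1)^(CARD('n)-1) * (\<Sum>m=1..l+1. sigma_tail J m)"
proof -
  define r where "r i = l + 1 - nat (supnorm i)" for i :: "'n\<Rightarrow>int"
  define K :: real where "K = 2 * CARD('n) * (2*l+1)^(CARD('n)-1)"
  have "(\<Sum>i\<in>cube l. \<Sum>\<^sub>\<infinity>j\<in>- cube l. J i j) \<le> (\<Sum>i\<in>cube l. sigma_tail J (r i))"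
    unfolding r_def by (intro sum_mono infsum_outside_cube_le_sigma_tail)
  also have "\<dots> = (\<Sum>m\<in>{1..l+1}. \<Sum>i\<in>{i\<in>cube l. r i = m}. sigma_tail J (r i))"
    by (rule sum.group[symmetric]) (use finite_cube in \<open>auto simp: r_def cube_def\<close>)
  also have "\<dots> = (\<Sum>m\<in>{1..l+1}. real (card {i\<in>cube l. r i = m}) * sigma_tail J m)"
    by (rule sum.cong) auto
  also have "\<dots> \<le> (\<Sum>m\<in>{1..l+1}. K * sigma_tail J m)"
  proof (intro sum_mono mult_right_mono sigma_tail_nonneg)
    fix m assume m: "m \<in> {1..l+1}"
    have "{i\<in>cube l. r i = m} \<subseteq> {i. supnorm i = int (l + 1 - m)}"
      unfolding r_def cube_def using supnorm_nonneg by force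
    moreover have "finite {i::'n\<Rightarrow>int. supnorm i = int (l + 1 - m)}"
      by (rule finite_subset[OF _ finite_cube[of "l+1-m"]]) (auto simp: cube_def)
    ultimately have "card {i\<in>cube l. r i = m} \<le> card {i::'n\<Rightarrow>int. supnorm i = int (l + 1 - m)}"
      by (rule card_mono[rotated])
    then have "real (card {i\<in>cube l. r i = m}) \<le> 2 * CARD('n) * (2*(l+1-m)+1)^(CARD('n)-1)"
      using card_supnorm_sphere_le[of "l+1-m", where 'n='n] by linarith
    also have "\<dots> \<le> K" unfolding K_def of_nat_le_iff using m
      by (intro mult_left_mono power_mono) auto
    finally show "real (card {i\<in>cube l. r i = m}) \<le> K" .
  qed
  also have "\<dots> = K * (\<Sum>m=1..l+1. sigma_tail J m)" by (rule sum_distrib_left[symmetric])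
  finally show ?thesis unfolding K_def .
qed

end

definition residue :: "nat \<Rightarrow> ('n::finite\<Rightarrow>int) \<Rightarrow> ('n\<Rightarrow>int)" where
  "residue \<tau> x = (\<lambda>k. x k mod int \<tau>)"

definition residue_box :: "nat \<Rightarrow> ('n::finite\<Rightarrow>int) set" where
  "residue_box \<tau> = PiE UNIV (\<lambda>_. {0..<int \<tau>})"

lemma residue_eq_iff: "residue \<tau> x = residue \<tau> y \<longleftrightarrow> (\<forall>k. int \<tau> dvd (x k - y k))"
  unfolding residue_def fun_eq_iff by (simp add: mod_eq_dvd_iff)

lemma residue_id: "x \<in> residue_box \<tau> \<Longrightarrow> residue \<tau> x = x"
  unfolding residue_def residue_box_def by (auto simp: PiE_iff fun_eq_iff)

lemma residue_in_residue_box: "0 < \<tau> \<Longrightarrow> residue \<tau> x \<in> residue_box \<tau>"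
  unfolding residue_def residue_box_def by (auto simp: PiE_iff)

lemma finite_residue_box: "finite (residue_box \<tau> :: ('n::finite\<Rightarrow>int) set)"
  unfolding residue_box_def by (rule finite_PiE) auto

lemma card_residue_box: "card (residue_box \<tau> :: ('n::finite\<Rightarrow>int) set) = \<tau>^CARD('n)"
  unfolding residue_box_def by (simp add: card_PiE)

lemma fundamental_domain_iff_bij_betw:
  fixes F :: "('n::finite\<Rightarrow>int) set"
  assumes "0 < \<tau>"
  shows "fundamental_domain \<tau> F \<longleftrightarrow> bij_betw (residue \<tau>) F (residue_box \<tau>)"
proof
  assume F: "fundamental_domain \<tau> F"
  show "bij_betw (residue \<tau>) F (residue_box \<tau>)"
    unfolding bij_betw_def
  proof (intro conjI inj_onI equalityI subsetI)
    fix f g assume "f \<in> F" "g \<in> F" "residue \<tau> f = residue \<tau> g"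
    then show "f = g"
      using F unfolding fundamental_domain_def residue_eq_iff[symmetric] by metis
  next
    fix c :: "'n\<Rightarrow>int" assume c: "c \<in> residue_box \<tau>"
    then obtain f where "f \<in> F" "residue \<tau> c = residue \<tau> f"
      using F unfolding fundamental_domain_def residue_eq_iff[symmetric] by metis
    then show "c \<in> residue \<tau> ` F" using residue_id[OF c] by auto
  qed (auto intro: residue_in_residue_box[OF assms])
next
  assume bij: "bij_betw (residue \<tau>) F (residue_box \<tau>)"
  show "fundamental_domain \<tau> F"
    unfolding fundamental_domain_def residue_eq_iff[symmetric]
  proof
    fix x
    obtain f where "f \<in> F" "residue \<tau> f = residue \<tau> x"
      using bij residue_in_residue_box[OF assms, of x] unfolding bij_betw_def by force
    then show "\<exists>!f. f \<in> F \<and> residue \<tau> x = residue \<tau> f"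
      using bij unfolding bij_betw_def inj_on_def by metis
  qed
qed

lemma bij_betw_residue_subset:
  "A \<subseteq> residue_box \<tau> \<Longrightarrow> bij_betw (residue \<tau>) A A"
  by (rule bij_betw_imageI) (auto simp: inj_on_def residue_id image_iff subset_iff)

lemma fundamental_domain_residue_box:
  "0 < \<tau> \<Longrightarrow> fundamental_domain \<tau> (residue_box \<tau> :: ('n::finite\<Rightarrow>int) set)"
  by (simp add: fundamental_domain_iff_bij_betw bij_betw_residue_subset)

text \<open>Exchanging one representative of a fundamental domain for another one of the same class
  leaves the sum of h unchanged, so zero sums over all fundamental domains force periodicity.\<close>

lemma eq_at_residue_if_zero_sums:
  fixes h :: "('n::finite\<Rightarrow>int) \<Rightarrow> real"
  assumes "0 < \<tau>" and h_zero: "\<And>F. finite F \<Longrightarrow> fundamental_domain \<tau> F \<Longrightarrow> (\<Sum>i\<in>F. h i) = 0"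
  shows "h (residue \<tau> x) = h x"
proof (cases "x \<in> residue_box \<tau>")
  case True
  then show ?thesis by (simp add: residue_id)
next
  case False
  define f where "f = residue \<tau> x"
  define B where "B = residue_box \<tau> - {f}"
  have "finite B" unfolding B_def by (simp add: finite_residue_box)
  have f: "f \<in> residue_box \<tau>" unfolding f_def by (rule residue_in_residue_box[OF assms(1)])
  have "bij_betw (residue \<tau>) B B"
    unfolding B_def by (rule bij_betw_residue_subset) blast
  then have "bij_betw (residue \<tau>) (B \<union> {x}) (B \<union> {f})"
    using False unfolding f_def B_def by (intro notIn_Un_bij_betw) auto
  moreover have "B \<union> {f} = residue_box \<tau>" using f unfolding B_def by auto
  ultimately have "fundamental_domain \<tau> (insert x B)"
    by (simp add: fundamental_domain_iff_bij_betw[OF assms(1)])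
  then have "h x + sum h B = 0"
    using h_zero[of "insert x B"] \<open>finite B\<close> False by (simp add: B_def)
  moreover have "h f + sum h B = 0"
    using h_zero[OF finite_residue_box fundamental_domain_residue_box[OF assms(1)]] f
    unfolding B_def by (simp add: sum.remove finite_residue_box)
  ultimately show ?thesis unfolding f_def by linarith
qed

lemma card_residue_class_bounds:
  fixes m n a :: int and \<tau> :: nat
  assumes "0 < \<tau>" "0 \<le> a" "a < int \<tau>" "m \<le> n"
  defines "x \<equiv> real_of_int (n - m) / real \<tau>"
  shows "x - 1 \<le> real (card {b\<in>{m..n}. b mod int \<tau> = a})"
    and "real (card {b\<in>{m..n}. b mod int \<tau> = a}) \<le> x + 1"
proof -
  define lo where "lo = \<lceil>real_of_int (m - a) / real \<tau>\<rceil>"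
  define hi where "hi = \<lfloor>real_of_int (n - a) / real \<tau>\<rfloor>"
  have "{b\<in>{m..n}. b mod int \<tau> = a} = (\<lambda>k. int \<tau> * k + a) ` {lo..hi}"
  proof (rule set_eqI)
    fix b
    have "b \<in> (\<lambda>k. int \<tau> * k + a) ` {lo..hi} \<longleftrightarrow> (\<exists>k. b = int \<tau> * k + a \<and> lo \<le> k \<and> k \<le> hi)"
      by auto
    also have "\<dots> \<longleftrightarrow> b mod int \<tau> = a \<and> m \<le> b \<and> b \<le> n"
    proof -
      have "lo \<le> k \<and> k \<le> hi \<longleftrightarrow> m \<le> int \<tau> * k + a \<and> int \<tau> * k + a \<le> n" for k
      proof -
        have "lo \<le> k \<and> k \<le> hi \<longleftrightarrow>
            real_of_int (m - a) \<le> real \<tau> * real_of_int k \<and> real \<tau> * real_of_int k \<le> real_of_int (n - a)"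
          unfolding lo_def hi_def using assms(1)
          by (simp add: ceiling_le_iff le_floor_iff pos_divide_le_eq pos_le_divide_eq mult.commute)
        also have "\<dots> \<longleftrightarrow> m - a \<le> int \<tau> * k \<and> int \<tau> * k \<le> n - a"
          by (metis of_int_le_iff of_int_mult of_int_of_nat_eq)
        also have "\<dots> \<longleftrightarrow> m \<le> int \<tau> * k + a \<and> int \<tau> * k + a \<le> n"
          by linarith
        finally show ?thesis .
      qed
      moreover have "b mod int \<tau> = a \<longleftrightarrow> (\<exists>k. b = int \<tau> * k + a)"
        using assms(2,3) by (metis mod_mult_self4 mod_pos_pos_trivial mult_div_mod_eq)
      ultimately show ?thesis by auto
    qed
    finally show "b \<in> {b\<in>{m..n}. b mod int \<tau> = a} \<longleftrightarrow> b \<in> (\<lambda>k. int \<tau> * k + a) ` {lo..hi}"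
      by auto
  qed
  moreover have "inj (\<lambda>k. int \<tau> * k + a)" using assms(1) by (auto intro: injI)
  ultimately have card: "card {b\<in>{m..n}. b mod int \<tau> = a} = nat (hi - lo + 1)"
    by (simp add: card_image inj_on_subset)
  have "real_of_int (n - a) / real \<tau> - real_of_int (m - a) / real \<tau> = x"
    unfolding x_def using assms(1) by (simp add: field_simps)
  moreover have "x \<ge> 0" unfolding x_def using assms(4) by simp
  moreover have "real_of_int (n - a) / real \<tau> - 1 < hi" "hi \<le> real_of_int (n - a) / real \<tau>"
    "real_of_int (m - a) / real \<tau> \<le> lo" "lo < real_of_int (m - a) / real \<tau> + 1"
    unfolding lo_def hi_def by linarith+
  ultimately have "x - 1 < real_of_int (hi - lo + 1)" "real_of_int (hi - lo + 1) \<le> x + 1"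
    "0 \<le> hi - lo + 1"
    by linarith+
  then show "x - 1 \<le> real (card {b\<in>{m..n}. b mod int \<tau> = a})"
    and "real (card {b\<in>{m..n}. b mod int \<tau> = a}) \<le> x + 1"
    unfolding card by simp_all
qed

lemma cube_fiber_eq_PiE:
  "{x\<in>cube l. residue \<tau> x = f}
     = (PiE UNIV (\<lambda>k. {b\<in>{-int l..int l}. b mod int \<tau> = f k}) :: ('n::finite\<Rightarrow>int) set)"
  unfolding cube_eq_PiE residue_def by (auto simp: PiE_iff fun_eq_iff)

lemma card_cube_fiber_bounds:
  fixes f :: "'n::finite\<Rightarrow>int" and l :: nat
  assumes "0 < \<tau>" "f \<in> residue_box \<tau>"
  defines "x \<equiv> real (2*l) / real \<tau>"
  shows "max 0 (x - 1) ^ CARD('n) \<le> real (card {i\<in>cube l. residue \<tau> i = f})"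
    and "real (card {i\<in>cube l. residue \<tau> i = f}) \<le> (x + 1) ^ CARD('n)"
proof -
  define c where "c k = real (card {b\<in>{-int l..int l}. b mod int \<tau> = f k})" for k
  have card: "real (card {i\<in>cube l. residue \<tau> i = f}) = (\<Prod>k\<in>UNIV. c k)"
    unfolding cube_fiber_eq_PiE c_def by (simp add: card_PiE)
  have "real_of_int (int l - - int l) / real \<tau> = x" unfolding x_def by simp
  then have c: "max 0 (x - 1) \<le> c k \<and> c k \<le> x + 1" for k
    using card_residue_class_bounds[OF assms(1), of "f k" "- int l" "int l"] assms(2)
    unfolding c_def residue_box_def by (auto simp: PiE_iff)
  have "(\<Prod>k::'n\<in>UNIV. max 0 (x - 1)) \<le> (\<Prod>k\<in>UNIV. c k)"
    by (rule prod_mono) (use c in auto)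
  then show "max 0 (x - 1) ^ CARD('n) \<le> real (card {i\<in>cube l. residue \<tau> i = f})"
    unfolding card by simp
  have "(\<Prod>k\<in>UNIV. c k) \<le> (\<Prod>k::'n\<in>UNIV. x + 1)"
    by (rule prod_mono) (use c in \<open>auto simp: c_def\<close>)
  then show "real (card {i\<in>cube l. residue \<tau> i = f}) \<le> (x + 1) ^ CARD('n)"
    unfolding card by simp
qed

text \<open>Subtracting the mean-zero sum of h, only the spread U - L of the weights matters.\<close>

lemma abs_sum_weighted_le_of_sum_eq_0:
  fixes w h :: "'a \<Rightarrow> real"
  assumes "sum h A = 0" and "\<And>a. a \<in> A \<Longrightarrow> \<bar>h a\<bar> \<le> \<mu>"
    and "\<And>a. a \<in> A \<Longrightarrow> L \<le> w a \<and> w a \<le> U"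
  shows "\<bar>\<Sum>a\<in>A. w a * h a\<bar> \<le> real (card A) * (U - L) * \<mu>"
proof -
  have "(\<Sum>a\<in>A. w a * h a) = (\<Sum>a\<in>A. (w a - L) * h a)"
    using assms(1) by (simp add: left_diff_distrib sum_subtractf flip: sum_distrib_left)
  also have "\<bar>\<dots>\<bar> \<le> (\<Sum>a\<in>A. \<bar>w a - L\<bar> * \<bar>h a\<bar>)"
    by (rule order_trans[OF sum_abs]) (simp add: abs_mult)
  also have "\<dots> \<le> (\<Sum>a\<in>A. (U - L) * \<mu>)"
  proof (rule sum_mono)
    fix a assume "a \<in> A"
    then show "\<bar>w a - L\<bar> * \<bar>h a\<bar> \<le> (U - L) * \<mu>"
      using assms(2,3)[of a] by (intro mult_mono) auto
  qed
  finally show ?thesis by simp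
qed

lemma abs_sum_cube_le:
  fixes h :: "('n::finite\<Rightarrow>int) \<Rightarrow> real"
  assumes "0 < \<tau>" and h_bound: "\<And>i. \<bar>h i\<bar> \<le> \<mu>"
    and h_zero: "\<And>F. finite F \<Longrightarrow> fundamental_domain \<tau> F \<Longrightarrow> (\<Sum>i\<in>F. h i) = 0"
  shows "\<bar>\<Sum>i\<in>cube l. h i\<bar> \<le> real \<tau> ^ CARD('n) * (2 * CARD('n) * (2*l+1)^(CARD('n)-1)) * \<mu>"
proof -
  define d where "d = CARD('n) - 1"
  have d: "CARD('n) = Suc d" unfolding d_def by simp
  define x where "x = real (2*l) / real \<tau>"
  define n where "n f = real (card {i\<in>cube l. residue \<tau> i = f})" for f :: "'n\<Rightarrow>int"
  have "(\<Sum>i\<in>cube l. h i) = (\<Sum>i\<in>cube l. h (residue \<tau> i))"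
    using eq_at_residue_if_zero_sums[OF assms(1) h_zero] by simp
  also have "\<dots> = (\<Sum>f\<in>residue_box \<tau>. \<Sum>i\<in>{i\<in>cube l. residue \<tau> i = f}. h (residue \<tau> i))"
    by (rule sum.group[symmetric])
      (use finite_cube finite_residue_box residue_in_residue_box[OF assms(1)] in auto)
  also have "\<dots> = (\<Sum>f\<in>residue_box \<tau>. n f * h f)"
    unfolding n_def by (rule sum.cong) auto
  finally have "\<bar>\<Sum>i\<in>cube l. h i\<bar> = \<bar>\<Sum>f\<in>residue_box \<tau>. n f * h f\<bar>" by simp
  also have "\<dots> \<le> real (card (residue_box \<tau> :: ('n\<Rightarrow>int) set))
      * ((x + 1) ^ CARD('n) - max 0 (x - 1) ^ CARD('n)) * \<mu>"
    using card_cube_fiber_bounds[OF assms(1)] unfolding n_def x_def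
    by (intro abs_sum_weighted_le_of_sum_eq_0 h_bound
        h_zero[OF finite_residue_box fundamental_domain_residue_box[OF assms(1)]]) auto
  also have "(x + 1) ^ CARD('n) - max 0 (x - 1) ^ CARD('n) \<le> 2 * CARD('n) * (2*l+1)^(CARD('n)-1)"
  proof -
    have "x \<le> 2 * real l" unfolding x_def using assms(1) by (simp add: field_simps mult_le_cancel_right1)
    have "(x + 1) ^ Suc d - max 0 (x - 1) ^ Suc d
        \<le> real (Suc d) * (x + 1) ^ d * ((x + 1) - max 0 (x - 1))"
      by (rule power_Suc_diff_le) (auto simp: x_def)
    also have "\<dots> \<le> real (Suc d) * (2 * real l + 1) ^ d * 2"
      using \<open>x \<le> 2 * real l\<close> by (intro mult_mono power_mono) (auto simp: x_def)
    finally show ?thesis unfolding d by (simp add: algebra_simps)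
  qed
  finally show ?thesis
    using h_bound[of undefined] by (simp add: card_residue_box mult_left_mono mult_right_mono)
qed

lemma hamiltonian_psi_le:
  fixes J :: "('n::finite\<Rightarrow>int) \<Rightarrow> ('n\<Rightarrow>int) \<Rightarrow> real" and h :: "('n\<Rightarrow>int) \<Rightarrow> real"
  assumes J_nonneg: "\<And>i j. J i j \<ge> 0" and J_sym: "\<And>i j. J i j = J j i"
    and J_summable: "\<And>i. J i summable_on UNIV" and J_row_le: "\<And>i. (\<Sum>\<^sub>\<infinity>j. J i j) \<le> \<Lambda>"
    and "0 < \<tau>" and h_bound: "\<And>i. \<bar>h i\<bar> \<le> \<mu>"
    and h_zero: "\<And>F. finite F \<Longrightarrow> fundamental_domain \<tau> F \<Longrightarrow> (\<Sum>i\<in>F. h i) = 0"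
  shows "hamiltonian J h (cube l) (psi l)
    \<le> 2 * CARD('n) * (2*l+1)^(CARD('n)-1) * (4 * (\<Sum>m=1..l+1. sigma_tail J m) + real \<tau> ^ CARD('n) * \<mu>)"
proof -
  let ?P = "2 * CARD('n) * (2*l+1)^(CARD('n)-1) :: real"
  have "(\<Sum>\<^sub>\<infinity>(i,j)\<in>UNIV - (- cube l) \<times> (- cube l). J i j * (1 - psi l i * psi l j))
      \<le> 4 * (\<Sum>i\<in>cube l. \<Sum>\<^sub>\<infinity>j\<in>- cube l. J i j)"
    by (rule interaction_energy_le_boundary_coupling) (auto simp: finite_cube psi_def J_nonneg J_sym)
  also have "\<dots> \<le> 4 * (?P * (\<Sum>m=1..l+1. sigma_tail J m))"
    using boundary_coupling_le[of J \<Lambda> l, OF J_nonneg J_summable J_row_le] by linarith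
  finally have interaction: "(\<Sum>\<^sub>\<infinity>(i,j)\<in>UNIV - (- cube l) \<times> (- cube l). J i j * (1 - psi l i * psi l j))
      \<le> 4 * (?P * (\<Sum>m=1..l+1. sigma_tail J m))" .
  have "(\<Sum>i\<in>cube l. h i * psi l i) = - (\<Sum>i\<in>cube l. h i)"
    by (simp add: psi_def sum_negf)
  also have "\<dots> \<le> real \<tau> ^ CARD('n) * ?P * \<mu>"
    using abs_sum_cube_le[OF \<open>0 < \<tau>\<close> h_bound h_zero, of l] by linarith
  finally show ?thesis
    using interaction unfolding hamiltonian_def by (simp add: algebra_simps)
qed

lemma droplet_bound_le_constant:
  fixes S M :: real and d l :: nat
  assumes "0 \<le> S" "0 \<le> M" "1 \<le> l"
  shows "real (2 * d * (2*l+1)^(d-1)) * (4 * S + M)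
    \<le> 8 * real d * 3^(d-1) * (1 + M) * real l^(d-1) * (1 + S)"
proof -
  have "real (2*l+1)^(d-1) \<le> (3 * real l)^(d-1)" using assms(3) by (intro power_mono) auto
  then have "real (2*l+1)^(d-1) \<le> 3^(d-1) * real l^(d-1)" by (simp add: power_mult_distrib)
  moreover have "4 * S + M \<le> 4 * ((1 + M) * (1 + S))"
    using assms(1,2) mult_nonneg_nonneg[of M S] by (simp add: algebra_simps)
  ultimately have "2 * d * real (2*l+1)^(d-1) * (4 * S + M)
      \<le> 2 * d * (3^(d-1) * l^(d-1)) * (4 * ((1 + M) * (1 + S)))"
    using assms(1,2) by (intro mult_mono) (auto intro: mult_left_mono)
  then show ?thesis by (simp add: algebra_simps)
qed

theorem mainTheorem7:
  fixes \<mu> :: real and \<tau> :: nat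
  assumes "CARD('n::finite) \<ge> 2" and "\<mu> > 0" and "\<tau> \<ge> 1"
  shows "\<exists>C\<ge>1. \<forall>(J :: ('n \<Rightarrow> int) \<Rightarrow> ('n \<Rightarrow> int) \<Rightarrow> real) (h :: ('n \<Rightarrow> int) \<Rightarrow> real)
            (lam::real) (Lam::real) (l::nat).
     (\<forall>i j. J i j \<ge> 0) \<longrightarrow>
     0 < lam \<longrightarrow> lam \<le> Lam \<longrightarrow>
     (\<forall>i j. J i j = J j i) \<longrightarrow>
     (\<forall>i. J i i = 0) \<longrightarrow>
     (\<forall>i j. l1norm (i - j) = 1 \<longrightarrow> J i j \<ge> lam) \<longrightarrow>
     (\<forall>i. J i summable_on UNIV \<and> (\<Sum>\<^sub>\<infinity>j. J i j) \<le> Lam) \<longrightarrow>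
     (\<forall>i. \<bar>h i\<bar> \<le> \<mu>) \<longrightarrow>
     (\<forall>F. finite F \<longrightarrow> fundamental_domain \<tau> F \<longrightarrow> (\<Sum>i\<in>F. h i) = 0) \<longrightarrow>
     l \<ge> 1 \<longrightarrow>
     hamiltonian J h (cube l) (psi l)
       \<le> C * real l ^ (CARD('n) - 1) * (1 + (\<Sum>m=1..l+1. sigma_tail J m))"
proof -
  define d where "d = CARD('n)"
  define M where "M = real \<tau> ^ d * \<mu>"
  define C where "C = 8 * real d * 3^(d-1) * (1 + M)"
  have "M \<ge> 0" unfolding M_def using assms(2) by simp
  have "1 * 1 \<le> real d * 3^(d-1)" using assms(1) by (intro mult_mono) (auto simp: d_def)
  then have "1 * 1 \<le> real d * 3^(d-1) * (1 + M)" using \<open>M \<ge> 0\<close> by (intro mult_mono) auto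
  then have "C \<ge> 1" unfolding C_def by linarith
  show ?thesis
  proof (intro exI[of _ C] conjI \<open>C \<ge> 1\<close> allI impI)
    fix J :: "('n \<Rightarrow> int) \<Rightarrow> ('n \<Rightarrow> int) \<Rightarrow> real" and h :: "('n \<Rightarrow> int) \<Rightarrow> real"
      and lam \<Lambda> :: real and l :: nat
    assume J_nonneg: "\<forall>i j. J i j \<ge> 0" and J_sym: "\<forall>i j. J i j = J j i"
      and J_row: "\<forall>i. J i summable_on UNIV \<and> (\<Sum>\<^sub>\<infinity>j. J i j) \<le> \<Lambda>"
      and h_bound: "\<forall>i. \<bar>h i\<bar> \<le> \<mu>"
      and h_zero: "\<forall>F. finite F \<longrightarrow> fundamental_domain \<tau> F \<longrightarrow> (\<Sum>i\<in>F. h i) = 0"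
      and "l \<ge> 1"
    define S where "S = (\<Sum>m=1..l+1. sigma_tail J m)"
    have "S \<ge> 0" unfolding S_def using J_nonneg J_row
      by (intro sum_nonneg sigma_tail_nonneg) auto
    have "hamiltonian J h (cube l) (psi l) \<le> 2 * d * (2*l+1)^(d-1) * (4 * S + M)"
      unfolding d_def S_def M_def using J_nonneg J_sym J_row h_bound h_zero assms(3)
      by (intro hamiltonian_psi_le[where \<Lambda>=\<Lambda>]) auto
    also have "\<dots> \<le> C * real l ^ (CARD('n) - 1) * (1 + S)"
      unfolding C_def d_def by (rule droplet_bound_le_constant) fact+
    finally show "hamiltonian J h (cube l) (psi l)
       \<le> C * real l ^ (CARD('n) - 1) * (1 + (\<Sum>m=1..l+1. sigma_tail J m))" unfolding S_def .
  qed
qed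

end
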